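(* Let $\alpha=(\alpha_1,\dots,\alpha_t)$ be palindromic (i.e. $\alpha_i=\alpha_{t+1-i}$ for all $i$) with $t$ odd, let $F=\breve F(\alpha)$ with elements $x_1,\dots,x_n$ and shared elements $s_1,\dots,s_{t-1}$. Assume that $\hat\chi_{s_i}+\hat\chi_{s_{t-i}}$ is $1$-mesic under rowmotion for all $i\in[t-1]$. Then (1) $\hat\chi_{x_k}+\hat\chi_{x_{n-k+1}}$ is $1$-mesic for all $k\in[n]$, and (2) $\chi_{x_k}-\chi_{x_{n-k+1}}$ is $0$-mesic for all $k\in[n]$.
   Context: A fence $\breve F(\alpha_1,\dots,\alpha_t)$ ($t\ge2$, positive integers, $\alpha_1,\alpha_t\ge2$) is the poset on $\{x_1,\dots,x_n\}$, $n=\alpha_1+\dots+\alpha_t-1$, with $a_i=\alpha_1+\dots+\alpha_i$, $a_0=0$, whose cover relations are: for $1\le j\le n-1$ with $a_{i-1}\le j<a_i$, $x_j\lessdot x_{j+1}$ if $i$ odd and $x_j\gtrdot x_{j+1}$ if $i$ even. Shared elements: $s_i=x_{a_i}$. $\mathcal J(F)$ is the set of order ideals; rowmotion $\rho$ sends $I$ to the order ideal generated by $\min(F\setminus I)$. $\hat\chi_q(I)=1$ if $q\in I$, else 0; $\chi_q(I)=1$ if $q\in\max(I)$, else 0. A statistic $f:\mathcal J(F)\to\mathbb R$ is $c$-mesic under rowmotion if its average over every $\rho$-orbit equals $c$. *)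

theory Defs
  imports Complex_Main
begin

text \<open>A fence is given by its composition alpha, a list [alpha_1, ..., alpha_t].
  Elements x_1..x_n are represented by the naturals 1..n.\<close>

definition is_fence_comp :: "nat list \<Rightarrow> bool" where
  "is_fence_comp \<alpha> \<longleftrightarrow> length \<alpha> \<ge> 2 \<and> (\<forall>a\<in>set \<alpha>. a > 0)
     \<and> hd \<alpha> \<ge> 2 \<and> last \<alpha> \<ge> 2"

definition psum :: "nat list \<Rightarrow> nat \<Rightarrow> nat" where
  "psum \<alpha> i = sum_list (take i \<alpha>)"

definition fsize :: "nat list \<Rightarrow> nat" where
  "fsize \<alpha> = sum_list \<alpha> - 1"

definition seg :: "nat list \<Rightarrow> nat \<Rightarrow> nat" where
  "seg \<alpha> j = (LEAST i. j < psum \<alpha> i)"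

text \<open>cover relation: fcover x y means x is covered by y\<close>
definition fcover :: "nat list \<Rightarrow> nat \<Rightarrow> nat \<Rightarrow> bool" where
  "fcover \<alpha> x y \<longleftrightarrow> (\<exists>j. 1 \<le> j \<and> j < fsize \<alpha> \<and>
      ((odd (seg \<alpha> j) \<and> x = j \<and> y = j + 1) \<or> (even (seg \<alpha> j) \<and> x = j + 1 \<and> y = j)))"

definition fle :: "nat list \<Rightarrow> nat \<Rightarrow> nat \<Rightarrow> bool" where
  "fle \<alpha> = (fcover \<alpha>)\<^sup>*\<^sup>*"

definition felems :: "nat list \<Rightarrow> nat set" where
  "felems \<alpha> = {1..fsize \<alpha>}"

definition order_ideals :: "nat list \<Rightarrow> nat set set" where
  "order_ideals \<alpha> = {I. I \<subseteq> felems \<alpha> \<and>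
      (\<forall>x\<in>I. \<forall>y\<in>felems \<alpha>. fle \<alpha> y x \<longrightarrow> y \<in> I)}"

definition fmin :: "nat list \<Rightarrow> nat set \<Rightarrow> nat set" where
  "fmin \<alpha> S = {x\<in>S. \<forall>y\<in>S. fle \<alpha> y x \<longrightarrow> y = x}"

definition fmax :: "nat list \<Rightarrow> nat set \<Rightarrow> nat set" where
  "fmax \<alpha> S = {x\<in>S. \<forall>y\<in>S. fle \<alpha> x y \<longrightarrow> y = x}"

definition rowmotion :: "nat list \<Rightarrow> nat set \<Rightarrow> nat set" where
  "rowmotion \<alpha> I = {y\<in>felems \<alpha>. \<exists>m\<in>fmin \<alpha> (felems \<alpha> - I). fle \<alpha> y m}"

definition orbit :: "nat list \<Rightarrow> nat set \<Rightarrow> nat set set" where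
  "orbit \<alpha> I = {(rowmotion \<alpha> ^^ k) I | k. True}"

definition mesic :: "nat list \<Rightarrow> (nat set \<Rightarrow> real) \<Rightarrow> real \<Rightarrow> bool" where
  "mesic \<alpha> f c \<longleftrightarrow> (\<forall>I\<in>order_ideals \<alpha>.
      (\<Sum>J\<in>orbit \<alpha> I. f J) / real (card (orbit \<alpha> I)) = c)"

definition chi_hat :: "nat \<Rightarrow> nat set \<Rightarrow> real" where
  "chi_hat q I = (if q \<in> I then 1 else 0)"

definition chi :: "nat list \<Rightarrow> nat \<Rightarrow> nat set \<Rightarrow> real" where
  "chi \<alpha> q I = (if q \<in> fmax \<alpha> I then 1 else 0)"

definition shared :: "nat list \<Rightarrow> nat \<Rightarrow> nat" where
  "shared \<alpha> i = psum \<alpha> i"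

end

theory Submission
  imports Defs
begin

(* Let g(k) be the number of ideals of a rowmotion orbit that contain x_k, extended by
   g(0) = size of the orbit and g(n+1) = 0.  Since rowmotion permutes the orbit, x_k is maximal
   in as many ideals of the orbit as it is minimal in their complements.  Evaluating both counts
   locally shows that g has vanishing second difference inside every segment, and expresses the
   orbit sum of chi_{x_k} through g and the shape of the fence at x_k (chain, peak or valley).
   For a palindromic composition of odd length the reflection x_k -> x_{n+1-k} is an
   automorphism of the fence, so D(k) = g(k) + g(n+1-k) - (size of the orbit) is affine on each
   segment; the hypothesis makes D vanish at the shared elements, hence everywhere, which is (1).
   The reflection exchanges peaks and valleys and preserves chains, so with (1) the local
   formulas give (2). *)

section \<open>The order of a fence\<close>

abbreviation step_up :: "nat list \<Rightarrow> nat \<Rightarrow> bool" where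
  "step_up \<alpha> j \<equiv> odd (seg \<alpha> j)"

lemma fcover_iff:
  "fcover \<alpha> x y \<longleftrightarrow>
     (1 \<le> x \<and> x < fsize \<alpha> \<and> step_up \<alpha> x \<and> y = x + 1) \<or>
     (1 \<le> y \<and> y < fsize \<alpha> \<and> \<not> step_up \<alpha> y \<and> x = y + 1)"
  unfolding fcover_def by auto

lemma fcover_above_iff:
  "1 \<le> k \<Longrightarrow> fcover \<alpha> k y \<longleftrightarrow>
     (k < fsize \<alpha> \<and> step_up \<alpha> k \<and> y = k + 1) \<or>
     (1 < k \<and> k \<le> fsize \<alpha> \<and> \<not> step_up \<alpha> (k - 1) \<and> y = k - 1)"
  unfolding fcover_iff by auto

lemma fcover_below_iff:
  "1 \<le> k \<Longrightarrow> fcover \<alpha> y k \<longleftrightarrow>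
     (1 < k \<and> k \<le> fsize \<alpha> \<and> step_up \<alpha> (k - 1) \<and> y = k - 1) \<or>
     (k < fsize \<alpha> \<and> \<not> step_up \<alpha> k \<and> y = k + 1)"
  unfolding fcover_iff by auto

lemma fcover_felems: "fcover \<alpha> x y \<Longrightarrow> x \<in> felems \<alpha> \<and> y \<in> felems \<alpha>"
  unfolding fcover_iff felems_def by auto

lemma fcover_neq: "fcover \<alpha> x y \<Longrightarrow> x \<noteq> y"
  unfolding fcover_iff by auto

lemma fle_refl: "fle \<alpha> x x"
  unfolding fle_def by simp

lemma fle_trans: "fle \<alpha> x y \<Longrightarrow> fle \<alpha> y z \<Longrightarrow> fle \<alpha> x z"
  unfolding fle_def by simp

lemma fle_if_fcover: "fcover \<alpha> x y \<Longrightarrow> fle \<alpha> x y"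
  unfolding fle_def by simp

lemma fle_felems: "fle \<alpha> x y \<Longrightarrow> x \<noteq> y \<Longrightarrow> x \<in> felems \<alpha> \<and> y \<in> felems \<alpha>"
  unfolding fle_def by (induction rule: rtranclp_induct) (auto dest: fcover_felems)

lemma fle_steps:
  "fle \<alpha> x y \<Longrightarrow>
     (\<forall>j. x \<le> j \<and> j < y \<longrightarrow> step_up \<alpha> j) \<and> (\<forall>j. y \<le> j \<and> j < x \<longrightarrow> \<not> step_up \<alpha> j)"
  unfolding fle_def
proof (induction rule: rtranclp_induct)
  case (step y z)
  from \<open>fcover \<alpha> y z\<close> consider "step_up \<alpha> y" "z = y + 1" | "\<not> step_up \<alpha> z" "y = z + 1"
    unfolding fcover_iff by blast
  then show ?case
  proof cases
    case 1
    with step.IH show ?thesis by (auto simp: less_Suc_eq)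
  next
    case 2
    with step.IH show ?thesis by (auto simp: less_Suc_eq) (metis Suc_leI le_neq_implies_less)
  qed
qed auto

lemma fle_antisym: "fle \<alpha> x y \<Longrightarrow> fle \<alpha> y x \<Longrightarrow> x = y"
  using fle_steps[of \<alpha> x y] fle_steps[of \<alpha> y x] by (metis le_refl nat_neq_iff)

lemma wf_strict_fle: "wf {(x, y). fle \<alpha> x y \<and> x \<noteq> y}" (is "wf ?less")
proof (rule finite_acyclic_wf)
  show "finite ?less"
    by (rule finite_subset[of _ "felems \<alpha> \<times> felems \<alpha>"]) (auto dest: fle_felems simp: felems_def)
  have "trans ?less"
    by (rule transI) (use fle_trans fle_antisym in blast)
  then show "acyclic ?less"
    by (simp add: acyclic_irrefl trancl_id irrefl_def)
qed

lemma order_ideal_subset: "J \<in> order_ideals \<alpha> \<Longrightarrow> J \<subseteq> felems \<alpha>"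
  unfolding order_ideals_def by blast

lemma order_ideal_downward: "J \<in> order_ideals \<alpha> \<Longrightarrow> y \<in> J \<Longrightarrow> fle \<alpha> x y \<Longrightarrow> x \<in> J"
  unfolding order_ideals_def using fle_felems by (cases "x = y") auto

lemma order_ideal_fcover: "J \<in> order_ideals \<alpha> \<Longrightarrow> fcover \<alpha> x y \<Longrightarrow> y \<in> J \<Longrightarrow> x \<in> J"
  using order_ideal_downward fle_if_fcover by blast

lemma order_ideal_step_up:
  assumes J: "J \<in> order_ideals \<alpha>" and "step_up \<alpha> k" "k + 1 \<in> J"
  shows "k = 0 \<or> k \<in> J"
proof (cases "k = 0")
  case False
  moreover have "k + 1 \<le> fsize \<alpha>"
    using assms(3) order_ideal_subset[OF J] by (auto simp: felems_def)
  ultimately have "fcover \<alpha> k (k + 1)"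
    using assms(2) by (simp add: fcover_iff)
  then show ?thesis using order_ideal_fcover[OF J] assms(3) by blast
qed simp

lemma order_ideal_step_down:
  assumes J: "J \<in> order_ideals \<alpha>" and "\<not> step_up \<alpha> k" "k \<in> J" "k < fsize \<alpha>"
  shows "k + 1 \<in> J"
proof -
  have "1 \<le> k" using assms(3) order_ideal_subset[OF J] by (auto simp: felems_def)
  then have "fcover \<alpha> (k + 1) k" using assms(2,4) by (simp add: fcover_iff)
  then show ?thesis using order_ideal_fcover[OF J] assms(3) by blast
qed

lemma fmax_order_ideal_iff:
  assumes "J \<in> order_ideals \<alpha>"
  shows "x \<in> fmax \<alpha> J \<longleftrightarrow> x \<in> J \<and> (\<forall>y. fcover \<alpha> x y \<longrightarrow> y \<notin> J)"
proof
  assume x: "x \<in> J \<and> (\<forall>y. fcover \<alpha> x y \<longrightarrow> y \<notin> J)"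
  have "y = x" if "y \<in> J" "fle \<alpha> x y" for y
  proof (rule ccontr)
    assume "y \<noteq> x"
    with \<open>fle \<alpha> x y\<close> obtain z where "fcover \<alpha> x z" "fle \<alpha> z y"
      unfolding fle_def by (metis converse_rtranclpE)
    with that x assms show False using order_ideal_downward by blast
  qed
  with x show "x \<in> fmax \<alpha> J" unfolding fmax_def by blast
qed (auto simp: fmax_def dest: fle_if_fcover fcover_neq)

lemma fmin_compl_order_ideal_iff:
  assumes "J \<in> order_ideals \<alpha>"
  shows "x \<in> fmin \<alpha> (felems \<alpha> - J) \<longleftrightarrow>
    x \<in> felems \<alpha> \<and> x \<notin> J \<and> (\<forall>y. fcover \<alpha> y x \<longrightarrow> y \<in> J)"
proof
  assume x: "x \<in> felems \<alpha> \<and> x \<notin> J \<and> (\<forall>y. fcover \<alpha> y x \<longrightarrow> y \<in> J)"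
  have "y = x" if "y \<in> felems \<alpha> - J" "fle \<alpha> y x" for y
  proof (rule ccontr)
    assume "y \<noteq> x"
    with \<open>fle \<alpha> y x\<close> obtain z where "fle \<alpha> y z" "fcover \<alpha> z x"
      unfolding fle_def by (metis rtranclp.cases)
    with that x assms show False using order_ideal_downward by blast
  qed
  with x show "x \<in> fmin \<alpha> (felems \<alpha> - J)" unfolding fmin_def by blast
qed (auto simp: fmin_def dest: fle_if_fcover fcover_neq fcover_felems)

section \<open>Rowmotion\<close>

lemma rowmotion_order_ideal: "rowmotion \<alpha> J \<in> order_ideals \<alpha>"
  unfolding order_ideals_def rowmotion_def using fle_trans by blast

lemma fmax_rowmotion:
  "J \<in> order_ideals \<alpha> \<Longrightarrow> fmax \<alpha> (rowmotion \<alpha> J) = fmin \<alpha> (felems \<alpha> - J)"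
  unfolding fmax_def fmin_def rowmotion_def
  by (blast dest: fle_trans fle_antisym intro: fle_refl)

lemma exists_fmin_compl_below:
  assumes "J \<in> order_ideals \<alpha>" "y \<in> felems \<alpha> - J"
  shows "\<exists>m\<in>fmin \<alpha> (felems \<alpha> - J). fle \<alpha> m y"
proof -
  let ?S = "{z \<in> felems \<alpha> - J. fle \<alpha> z y}"
  have "y \<in> ?S" using assms(2) fle_refl by blast
  with wf_strict_fle obtain m
    where m: "m \<in> ?S" and min: "\<And>z. fle \<alpha> z m \<Longrightarrow> z \<noteq> m \<Longrightarrow> z \<notin> ?S"
    by (rule wfE_min) blast
  have "m \<in> fmin \<alpha> (felems \<alpha> - J)"
    unfolding fmin_def using m min fle_trans by blast
  with m show ?thesis by blast
qed

lemma order_ideal_eq: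
  assumes "J \<in> order_ideals \<alpha>"
  shows "J = {y \<in> felems \<alpha>. \<not> (\<exists>m\<in>fmin \<alpha> (felems \<alpha> - J). fle \<alpha> m y)}"
  using exists_fmin_compl_below[OF assms] order_ideal_downward[OF assms] order_ideal_subset[OF assms]
  unfolding fmin_def by blast

lemma inj_on_rowmotion: "inj_on (rowmotion \<alpha>) (order_ideals \<alpha>)"
proof (rule inj_onI)
  fix J K assume "J \<in> order_ideals \<alpha>" "K \<in> order_ideals \<alpha>" "rowmotion \<alpha> J = rowmotion \<alpha> K"
  then have "fmin \<alpha> (felems \<alpha> - J) = fmin \<alpha> (felems \<alpha> - K)"
    by (simp flip: fmax_rowmotion)
  then show "J = K"
    using order_ideal_eq \<open>J \<in> order_ideals \<alpha>\<close> \<open>K \<in> order_ideals \<alpha>\<close> by metis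
qed

lemma chi_eq:
  assumes J: "J \<in> order_ideals \<alpha>" and k: "k \<in> felems \<alpha>"
  shows "chi \<alpha> k J =
    of_bool (k \<in> J \<and> (k < fsize \<alpha> \<and> step_up \<alpha> k \<longrightarrow> k + 1 \<notin> J)
      \<and> (1 < k \<and> \<not> step_up \<alpha> (k - 1) \<longrightarrow> k - 1 \<notin> J))"
proof -
  have "(\<forall>y. fcover \<alpha> k y \<longrightarrow> y \<notin> J) \<longleftrightarrow>
      (k < fsize \<alpha> \<and> step_up \<alpha> k \<longrightarrow> k + 1 \<notin> J) \<and> (1 < k \<and> \<not> step_up \<alpha> (k - 1) \<longrightarrow> k - 1 \<notin> J)"
    using k unfolding felems_def by (subst fcover_above_iff) auto
  then show ?thesis by (simp add: chi_def fmax_order_ideal_iff[OF J])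
qed

lemma chi_rowmotion_eq:
  assumes J: "J \<in> order_ideals \<alpha>" and k: "k \<in> felems \<alpha>"
  shows "chi \<alpha> k (rowmotion \<alpha> J) =
    of_bool (k \<notin> J \<and> (k < fsize \<alpha> \<and> \<not> step_up \<alpha> k \<longrightarrow> k + 1 \<in> J)
      \<and> (1 < k \<and> step_up \<alpha> (k - 1) \<longrightarrow> k - 1 \<in> J))"
proof -
  have "(\<forall>y. fcover \<alpha> y k \<longrightarrow> y \<in> J) \<longleftrightarrow>
      (k < fsize \<alpha> \<and> \<not> step_up \<alpha> k \<longrightarrow> k + 1 \<in> J) \<and> (1 < k \<and> step_up \<alpha> (k - 1) \<longrightarrow> k - 1 \<in> J)"
    using k unfolding felems_def by (subst fcover_below_iff) auto
  then show ?thesis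
    using k by (simp add: chi_def fmax_rowmotion[OF J] fmin_compl_order_ideal_iff[OF J])
qed

lemma finite_order_ideals: "finite (order_ideals \<alpha>)"
  by (rule finite_subset[of _ "Pow (felems \<alpha>)"]) (auto simp: order_ideals_def felems_def)

lemma orbit_subset_order_ideals: "I \<in> order_ideals \<alpha> \<Longrightarrow> orbit \<alpha> I \<subseteq> order_ideals \<alpha>"
proof -
  assume "I \<in> order_ideals \<alpha>"
  then have "(rowmotion \<alpha> ^^ k) I \<in> order_ideals \<alpha>" for k
    by (cases k) (simp_all add: rowmotion_order_ideal)
  then show ?thesis unfolding orbit_def by blast
qed

lemma finite_orbit: "I \<in> order_ideals \<alpha> \<Longrightarrow> finite (orbit \<alpha> I)"
  using finite_subset[OF orbit_subset_order_ideals finite_order_ideals] .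

lemma in_orbit_self: "I \<in> orbit \<alpha> I"
  unfolding orbit_def by (auto intro: exI[of _ 0])

lemma rowmotion_image_orbit:
  assumes "I \<in> order_ideals \<alpha>"
  shows "rowmotion \<alpha> ` orbit \<alpha> I = orbit \<alpha> I"
proof (rule endo_inj_surj)
  show "rowmotion \<alpha> ` orbit \<alpha> I \<subseteq> orbit \<alpha> I"
  proof
    fix K assume "K \<in> rowmotion \<alpha> ` orbit \<alpha> I"
    then obtain k where "K = (rowmotion \<alpha> ^^ Suc k) I"
      unfolding orbit_def by auto
    then show "K \<in> orbit \<alpha> I"
      unfolding orbit_def by blast
  qed
  show "inj_on (rowmotion \<alpha>) (orbit \<alpha> I)"
    using inj_on_subset[OF inj_on_rowmotion orbit_subset_order_ideals[OF assms]] .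
qed (rule finite_orbit[OF assms])

lemma sum_orbit_rowmotion:
  assumes "I \<in> order_ideals \<alpha>"
  shows "(\<Sum>J\<in>orbit \<alpha> I. f (rowmotion \<alpha> J)) = (\<Sum>J\<in>orbit \<alpha> I. f J)"
  using sum.reindex[OF inj_on_subset[OF inj_on_rowmotion orbit_subset_order_ideals[OF assms]], of f]
  by (simp add: rowmotion_image_orbit[OF assms])

lemma sum_orbit_cong:
  "I \<in> order_ideals \<alpha> \<Longrightarrow> (\<And>J. J \<in> order_ideals \<alpha> \<Longrightarrow> f J = h J) \<Longrightarrow>
    (\<Sum>J\<in>orbit \<alpha> I. f J) = (\<Sum>J\<in>orbit \<alpha> I. h J)"
  using orbit_subset_order_ideals[of I \<alpha>] by (auto intro: sum.cong)

lemma mesic_iff: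
  "mesic \<alpha> f c \<longleftrightarrow>
    (\<forall>I\<in>order_ideals \<alpha>. (\<Sum>J\<in>orbit \<alpha> I. f J) = c * real (card (orbit \<alpha> I)))"
proof -
  have "card (orbit \<alpha> I) \<noteq> 0" if "I \<in> order_ideals \<alpha>" for I
    using finite_orbit[OF that] in_orbit_self by (metis card_0_eq empty_iff)
  then show ?thesis unfolding mesic_def by (auto simp: divide_eq_eq)
qed

section \<open>Segments\<close>

lemma psum_0 [simp]: "psum \<alpha> 0 = 0"
  unfolding psum_def by simp

lemma psum_Suc: "i < length \<alpha> \<Longrightarrow> psum \<alpha> (Suc i) = psum \<alpha> i + \<alpha> ! i"
  unfolding psum_def by (simp add: take_Suc_conv_app_nth)

lemma psum_mono: "i \<le> j \<Longrightarrow> psum \<alpha> i \<le> psum \<alpha> j"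
proof -
  assume "i \<le> j"
  then have "take j \<alpha> = take i \<alpha> @ drop i (take j \<alpha>)"
    by (metis append_take_drop_id min_def take_take)
  then show ?thesis unfolding psum_def by (metis le_add1 sum_list_append)
qed

lemma seg_eqI:
  assumes "1 \<le> i" "psum \<alpha> (i - 1) \<le> j" "j < psum \<alpha> i"
  shows "seg \<alpha> j = i"
  unfolding seg_def
proof (rule Least_equality)
  fix y assume "j < psum \<alpha> y"
  show "i \<le> y"
  proof (rule ccontr)
    assume "\<not> i \<le> y"
    then have "psum \<alpha> y \<le> psum \<alpha> (i - 1)" by (intro psum_mono) simp
    with assms(2) \<open>j < psum \<alpha> y\<close> show False by simp
  qed
qed fact

lemma seg_bounds:
  assumes "j < psum \<alpha> (length \<alpha>)"
  shows "1 \<le> seg \<alpha> j" "seg \<alpha> j \<le> length \<alpha>"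
    and "psum \<alpha> (seg \<alpha> j - 1) \<le> j" "j < psum \<alpha> (seg \<alpha> j)"
proof -
  show "j < psum \<alpha> (seg \<alpha> j)" unfolding seg_def by (rule LeastI) fact
  then show "1 \<le> seg \<alpha> j" by (cases "seg \<alpha> j") (auto simp: psum_def)
  then show "psum \<alpha> (seg \<alpha> j - 1) \<le> j"
    unfolding seg_def by (intro leI not_less_Least) (simp add: seg_def)
  show "seg \<alpha> j \<le> length \<alpha>" unfolding seg_def by (rule Least_le) fact
qed

lemma step_up_within_segment:
  "1 \<le> i \<Longrightarrow> psum \<alpha> (i - 1) < k \<Longrightarrow> k < psum \<alpha> i \<Longrightarrow> step_up \<alpha> (k - 1) = step_up \<alpha> k"
  using seg_eqI[of i \<alpha> k] seg_eqI[of i \<alpha> "k - 1"] by simp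

locale fence =
  fixes \<alpha> :: "nat list"
  assumes fence_comp: "is_fence_comp \<alpha>"
begin

lemma two_le_length: "2 \<le> length \<alpha>"
  using fence_comp unfolding is_fence_comp_def by simp

lemma nonempty: "\<alpha> \<noteq> []"
  using two_le_length by auto

lemma two_le_first: "2 \<le> \<alpha> ! 0"
  using fence_comp nonempty unfolding is_fence_comp_def by (simp add: hd_conv_nth)

lemma two_le_last: "2 \<le> \<alpha> ! (length \<alpha> - 1)"
  using fence_comp nonempty unfolding is_fence_comp_def by (simp add: last_conv_nth)

lemma two_le_psum: "1 \<le> i \<Longrightarrow> 2 \<le> psum \<alpha> i"
  using psum_mono[of 1 i \<alpha>] psum_Suc[of 0 \<alpha>] two_le_first nonempty by simp

lemma psum_length: "psum \<alpha> (length \<alpha>) = fsize \<alpha> + 1"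
  using two_le_psum[of "length \<alpha>"] two_le_length by (simp add: psum_def fsize_def)

lemma segment_containing:
  assumes "k \<le> fsize \<alpha> + 1"
  obtains i where "1 \<le> i" "i \<le> length \<alpha>" "psum \<alpha> (i - 1) \<le> k" "k \<le> psum \<alpha> i"
proof (cases "k = fsize \<alpha> + 1")
  case True
  then show thesis
    using that[of "length \<alpha>"] two_le_length psum_length psum_mono[of "length \<alpha> - 1" "length \<alpha>" \<alpha>]
    by simp
next
  case False
  then have "k < psum \<alpha> (length \<alpha>)" using assms psum_length by simp
  then show thesis using that seg_bounds[of k] by (meson less_imp_le)
qed

lemma step_up_0: "step_up \<alpha> 0"
  using seg_eqI[of 1 \<alpha> 0] two_le_psum[of 1] by simp

lemma seg_fsize: "seg \<alpha> (fsize \<alpha>) = length \<alpha>"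
proof (rule seg_eqI)
  have "psum \<alpha> (length \<alpha>) = psum \<alpha> (length \<alpha> - 1) + \<alpha> ! (length \<alpha> - 1)"
    using psum_Suc[of "length \<alpha> - 1" \<alpha>] nonempty by simp
  then show "psum \<alpha> (length \<alpha> - 1) \<le> fsize \<alpha>"
    using psum_length two_le_last by simp
qed (use psum_length two_le_length in auto)

end

section \<open>Orbit counts\<close>

(* Indicator of J extended by a bottom element x_0 contained in every order ideal; a top element
   x_{n+1} is in none, as n+1 is not in felems.  Since step_up holds at 0, and at n when t is
   odd, x_0 and x_{n+1} prolong the first and last segments, which removes the boundary cases
   from the local analysis below. *)
definition ext_ind :: "nat set \<Rightarrow> nat \<Rightarrow> real" where
  "ext_ind J k = of_bool (k = 0 \<or> k \<in> J)"

definition orbit_count :: "nat list \<Rightarrow> nat set \<Rightarrow> nat \<Rightarrow> real" where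
  "orbit_count \<alpha> I k = (\<Sum>J\<in>orbit \<alpha> I. ext_ind J k)"

lemma orbit_count_0: "orbit_count \<alpha> I 0 = card (orbit \<alpha> I)"
  by (simp add: orbit_count_def ext_ind_def)

lemma orbit_count_eq_sum_chi_hat:
  "k \<noteq> 0 \<Longrightarrow> orbit_count \<alpha> I k = (\<Sum>J\<in>orbit \<alpha> I. chi_hat k J)"
  by (simp add: orbit_count_def ext_ind_def chi_hat_def of_bool_def)

lemma orbit_count_top: "I \<in> order_ideals \<alpha> \<Longrightarrow> orbit_count \<alpha> I (fsize \<alpha> + 1) = 0"
  using orbit_subset_order_ideals order_ideal_subset
  by (fastforce simp: orbit_count_def ext_ind_def felems_def intro: sum.neutral)

locale odd_fence = fence +
  assumes odd_length: "odd (length \<alpha>)"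
begin

lemma step_up_fsize: "step_up \<alpha> (fsize \<alpha>)"
  by (simp add: seg_fsize odd_length)

context
  fixes J k
  assumes J: "J \<in> order_ideals \<alpha>" and k: "k \<in> felems \<alpha>"
begin

lemma chi_ascending:
  assumes "step_up \<alpha> (k - 1)" "step_up \<alpha> k"
  shows "chi \<alpha> k J = ext_ind J k - ext_ind J (k + 1)"
    and "chi \<alpha> k (rowmotion \<alpha> J) = ext_ind J (k - 1) - ext_ind J k"
proof -
  have "k + 1 \<in> J \<Longrightarrow> k \<in> J" "k \<in> J \<Longrightarrow> k - 1 = 0 \<or> k - 1 \<in> J"
    using order_ideal_step_up[OF J assms(2)] order_ideal_step_up[OF J assms(1)] k
    by (auto simp: felems_def)
  moreover have "k + 1 \<in> J \<Longrightarrow> k < fsize \<alpha>"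
    using order_ideal_subset[OF J] by (auto simp: felems_def)
  ultimately show "chi \<alpha> k J = ext_ind J k - ext_ind J (k + 1)"
    and "chi \<alpha> k (rowmotion \<alpha> J) = ext_ind J (k - 1) - ext_ind J k"
    using assms k by (auto simp: chi_eq[OF J k] chi_rowmotion_eq[OF J k] ext_ind_def felems_def)
qed

lemma chi_descending:
  assumes "\<not> step_up \<alpha> (k - 1)" "\<not> step_up \<alpha> k"
  shows "chi \<alpha> k J = ext_ind J k - ext_ind J (k - 1)"
    and "chi \<alpha> k (rowmotion \<alpha> J) = ext_ind J (k + 1) - ext_ind J k"
proof -
  have "k < fsize \<alpha>"
    using assms(2) step_up_fsize k unfolding felems_def by (cases "k = fsize \<alpha>") auto
  moreover have "1 < k"
    using assms(1) step_up_0 k unfolding felems_def by (cases "k = 1") auto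
  ultimately have "k \<in> J \<Longrightarrow> k + 1 \<in> J" "k - 1 \<in> J \<Longrightarrow> k \<in> J"
    using order_ideal_step_down[OF J assms(2)] order_ideal_step_down[OF J assms(1)] by auto
  then show "chi \<alpha> k J = ext_ind J k - ext_ind J (k - 1)"
    and "chi \<alpha> k (rowmotion \<alpha> J) = ext_ind J (k + 1) - ext_ind J k"
    using assms \<open>k < fsize \<alpha>\<close> \<open>1 < k\<close>
    by (auto simp: chi_eq[OF J k] chi_rowmotion_eq[OF J k] ext_ind_def)
qed

lemma chi_peak:
  assumes "step_up \<alpha> (k - 1)" "\<not> step_up \<alpha> k"
  shows "chi \<alpha> k J = ext_ind J k"
  using assms k by (auto simp: chi_eq[OF J k] ext_ind_def felems_def)

lemma chi_rowmotion_valley: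
  assumes "\<not> step_up \<alpha> (k - 1)" "step_up \<alpha> k"
  shows "chi \<alpha> k (rowmotion \<alpha> J) = 1 - ext_ind J k"
  using assms k step_up_0 step_up_fsize
  by (auto simp: chi_rowmotion_eq[OF J k] ext_ind_def felems_def)

end

context
  fixes I k
  assumes I: "I \<in> order_ideals \<alpha>" and k: "k \<in> felems \<alpha>"
begin

lemma sum_orbit_chi_ascending:
  assumes "step_up \<alpha> (k - 1)" "step_up \<alpha> k"
  shows "(\<Sum>J\<in>orbit \<alpha> I. chi \<alpha> k J) = orbit_count \<alpha> I k - orbit_count \<alpha> I (k + 1)"
    and "(\<Sum>J\<in>orbit \<alpha> I. chi \<alpha> k J) = orbit_count \<alpha> I (k - 1) - orbit_count \<alpha> I k"
proof -
  show "(\<Sum>J\<in>orbit \<alpha> I. chi \<alpha> k J) = orbit_count \<alpha> I k - orbit_count \<alpha> I (k + 1)"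
    unfolding orbit_count_def sum_subtractf[symmetric]
    by (rule sum_orbit_cong[OF I]) (rule chi_ascending[OF _ k assms])
  have "(\<Sum>J\<in>orbit \<alpha> I. chi \<alpha> k (rowmotion \<alpha> J)) = orbit_count \<alpha> I (k - 1) - orbit_count \<alpha> I k"
    unfolding orbit_count_def sum_subtractf[symmetric]
    by (rule sum_orbit_cong[OF I]) (rule chi_ascending[OF _ k assms])
  then show "(\<Sum>J\<in>orbit \<alpha> I. chi \<alpha> k J) = orbit_count \<alpha> I (k - 1) - orbit_count \<alpha> I k"
    by (simp add: sum_orbit_rowmotion[OF I])
qed

lemma sum_orbit_chi_descending:
  assumes "\<not> step_up \<alpha> (k - 1)" "\<not> step_up \<alpha> k"
  shows "(\<Sum>J\<in>orbit \<alpha> I. chi \<alpha> k J) = orbit_count \<alpha> I k - orbit_count \<alpha> I (k - 1)"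
    and "(\<Sum>J\<in>orbit \<alpha> I. chi \<alpha> k J) = orbit_count \<alpha> I (k + 1) - orbit_count \<alpha> I k"
proof -
  show "(\<Sum>J\<in>orbit \<alpha> I. chi \<alpha> k J) = orbit_count \<alpha> I k - orbit_count \<alpha> I (k - 1)"
    unfolding orbit_count_def sum_subtractf[symmetric]
    by (rule sum_orbit_cong[OF I]) (rule chi_descending[OF _ k assms])
  have "(\<Sum>J\<in>orbit \<alpha> I. chi \<alpha> k (rowmotion \<alpha> J)) = orbit_count \<alpha> I (k + 1) - orbit_count \<alpha> I k"
    unfolding orbit_count_def sum_subtractf[symmetric]
    by (rule sum_orbit_cong[OF I]) (rule chi_descending[OF _ k assms])
  then show "(\<Sum>J\<in>orbit \<alpha> I. chi \<alpha> k J) = orbit_count \<alpha> I (k + 1) - orbit_count \<alpha> I k"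
    by (simp add: sum_orbit_rowmotion[OF I])
qed

lemma sum_orbit_chi_peak:
  assumes "step_up \<alpha> (k - 1)" "\<not> step_up \<alpha> k"
  shows "(\<Sum>J\<in>orbit \<alpha> I. chi \<alpha> k J) = orbit_count \<alpha> I k"
  unfolding orbit_count_def by (rule sum_orbit_cong[OF I]) (rule chi_peak[OF _ k assms])

lemma sum_orbit_chi_valley:
  assumes "\<not> step_up \<alpha> (k - 1)" "step_up \<alpha> k"
  shows "(\<Sum>J\<in>orbit \<alpha> I. chi \<alpha> k J) = card (orbit \<alpha> I) - orbit_count \<alpha> I k"
proof -
  have "(\<Sum>J\<in>orbit \<alpha> I. chi \<alpha> k (rowmotion \<alpha> J)) = (\<Sum>J\<in>orbit \<alpha> I. 1 - ext_ind J k)"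
    by (rule sum_orbit_cong[OF I]) (rule chi_rowmotion_valley[OF _ k assms])
  then show ?thesis
    by (simp add: sum_orbit_rowmotion[OF I] sum_subtractf orbit_count_def)
qed

lemma orbit_count_second_diff:
  "step_up \<alpha> (k - 1) = step_up \<alpha> k \<Longrightarrow>
    orbit_count \<alpha> I (k - 1) - 2 * orbit_count \<alpha> I k + orbit_count \<alpha> I (k + 1) = 0"
  using sum_orbit_chi_ascending sum_orbit_chi_descending by (cases "step_up \<alpha> k") auto

end

end

section \<open>Palindromic fences\<close>

lemma second_diff_zero_affine:
  fixes D :: "nat \<Rightarrow> real"
  assumes "\<And>k. p < k \<Longrightarrow> k < q \<Longrightarrow> D (k - 1) - 2 * D k + D (k + 1) = 0" and "p + i \<le> q"
  shows "D (p + i) = D p + i * (D (p + 1) - D p)"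
  using assms(2)
proof (induction i rule: less_induct)
  case (less i)
  consider "i = 0" | "i = 1" | j where "i = j + 2"
    by (metis One_nat_def add_2_eq_Suc' not0_implies_Suc)
  then show ?case
  proof cases
    case 3
    have "D (p + j) - 2 * D (p + j + 1) + D (p + j + 2) = 0"
      using assms(1)[of "p + j + 1"] less.prems 3 by (simp add: add.assoc)
    with less.IH[of j] less.IH[of "j + 1"] less.prems 3 show ?thesis
      by (simp add: algebra_simps add.assoc)
  qed simp_all
qed

lemma second_diff_zero_vanishes:
  fixes D :: "nat \<Rightarrow> real"
  assumes "\<And>k. p < k \<Longrightarrow> k < q \<Longrightarrow> D (k - 1) - 2 * D k + D (k + 1) = 0"
    and "D p = 0" "D q = 0" "p \<le> k" "k \<le> q"
  shows "D k = 0"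
proof -
  note affine = second_diff_zero_affine[where D = D and p = p and q = q, OF assms(1)]
  have "(q - p) * D (p + 1) = 0"
    using affine[of "q - p"] assms(2-5) by simp
  then have "k = p \<or> D (p + 1) = 0"
    using assms(4,5) by auto
  then show ?thesis
    using affine[of "k - p"] assms(2,4,5) by auto
qed

definition mirror_defect :: "nat list \<Rightarrow> nat set \<Rightarrow> nat \<Rightarrow> real" where
  "mirror_defect \<alpha> I k =
    orbit_count \<alpha> I k + orbit_count \<alpha> I (fsize \<alpha> + 1 - k) - card (orbit \<alpha> I)"

lemma mirror_defect_ends:
  assumes "I \<in> order_ideals \<alpha>"
  shows "mirror_defect \<alpha> I 0 = 0" "mirror_defect \<alpha> I (fsize \<alpha> + 1) = 0"
  using orbit_count_top[OF assms] by (simp_all add: mirror_defect_def orbit_count_0)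

locale palindromic_odd_fence = odd_fence +
  assumes palindromic: "rev \<alpha> = \<alpha>"
begin

lemma psum_rev: "i \<le> length \<alpha> \<Longrightarrow> psum \<alpha> (length \<alpha> - i) = fsize \<alpha> + 1 - psum \<alpha> i"
proof -
  assume "i \<le> length \<alpha>"
  then have "take (length \<alpha> - i) \<alpha> = rev (drop i \<alpha>)"
    using take_rev[of "length \<alpha> - i" \<alpha>] by (simp add: palindromic)
  then have "psum \<alpha> (length \<alpha> - i) = sum_list (drop i \<alpha>)"
    by (simp add: psum_def)
  moreover have "psum \<alpha> i + sum_list (drop i \<alpha>) = fsize \<alpha> + 1"
    using psum_length by (metis append_take_drop_id psum_def sum_list_append take_all order_refl)
  ultimately show ?thesis by simp
qed

lemma step_up_mirror:
  assumes "j \<le> fsize \<alpha>"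
  shows "step_up \<alpha> (fsize \<alpha> - j) = step_up \<alpha> j"
proof -
  define i where "i = seg \<alpha> j"
  have "j < psum \<alpha> (length \<alpha>)" using assms psum_length by simp
  note bounds = seg_bounds[OF this, folded i_def]
  have "seg \<alpha> (fsize \<alpha> - j) = length \<alpha> - (i - 1)"
  proof (rule seg_eqI)
    show "psum \<alpha> (length \<alpha> - (i - 1) - 1) \<le> fsize \<alpha> - j"
      using psum_rev[of i] bounds by (simp add: Suc_diff_Suc)
    show "fsize \<alpha> - j < psum \<alpha> (length \<alpha> - (i - 1))"
      using psum_rev[of "i - 1"] bounds assms by simp
  qed (use bounds in simp)
  then show ?thesis using odd_length bounds(1,2) unfolding i_def by auto
qed

lemma step_up_mirror_pred:
  "1 \<le> k \<Longrightarrow> k \<le> fsize \<alpha> \<Longrightarrow> step_up \<alpha> (fsize \<alpha> + 1 - k) = step_up \<alpha> (k - 1)"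
  using step_up_mirror[of "k - 1"] by (simp add: Suc_diff_le)

lemma mirror_defect_psum_if_mesic:
  assumes "\<forall>i\<in>{1..length \<alpha> - 1}.
      mesic \<alpha> (\<lambda>I. chi_hat (shared \<alpha> i) I + chi_hat (shared \<alpha> (length \<alpha> - i)) I) 1"
    and I: "I \<in> order_ideals \<alpha>" and i: "1 \<le> i" "i < length \<alpha>"
  shows "mirror_defect \<alpha> I (psum \<alpha> i) = 0"
proof -
  have shared: "shared \<alpha> i = psum \<alpha> i" "shared \<alpha> (length \<alpha> - i) = fsize \<alpha> + 1 - psum \<alpha> i"
    using psum_rev[of i] i by (simp_all add: shared_def)
  have "1 \<le> length \<alpha> - i" using i by simp
  then have nonzero: "psum \<alpha> i \<noteq> 0" "fsize \<alpha> + 1 - psum \<alpha> i \<noteq> 0"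
    using two_le_psum[OF i(1)] two_le_psum[of "length \<alpha> - i"] shared(2)
    by (simp_all add: shared_def)
  have "(\<Sum>J\<in>orbit \<alpha> I. chi_hat (shared \<alpha> i) J + chi_hat (shared \<alpha> (length \<alpha> - i)) J)
      = card (orbit \<alpha> I)"
    using assms(1) I i by (simp add: mesic_iff)
  then show ?thesis
    unfolding mirror_defect_def
    by (simp only: sum.distrib shared orbit_count_eq_sum_chi_hat[OF nonzero(1)]
        orbit_count_eq_sum_chi_hat[OF nonzero(2)])
qed

lemma mirror_defect_second_diff:
  assumes I: "I \<in> order_ideals \<alpha>"
    and i: "1 \<le> i" "i \<le> length \<alpha>" and j: "psum \<alpha> (i - 1) < j" "j < psum \<alpha> i"
  shows "mirror_defect \<alpha> I (j - 1) - 2 * mirror_defect \<alpha> I j + mirror_defect \<alpha> I (j + 1) = 0"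
proof -
  define m where "m = fsize \<alpha> + 1 - j"
  have "psum \<alpha> i \<le> fsize \<alpha> + 1"
    using psum_mono[of i "length \<alpha>" \<alpha>] i(2) psum_length by simp
  then have j_in: "j \<in> felems \<alpha>" and m_in: "m \<in> felems \<alpha>"
    using j by (auto simp: felems_def m_def)
  have "step_up \<alpha> (j - 1) = step_up \<alpha> j"
    using step_up_within_segment[OF i(1) j] .
  moreover have "step_up \<alpha> (m - 1) = step_up \<alpha> j" "step_up \<alpha> m = step_up \<alpha> (j - 1)"
    using step_up_mirror[of j] step_up_mirror_pred[of j] j_in by (simp_all add: m_def felems_def)
  ultimately have
    "orbit_count \<alpha> I (j - 1) - 2 * orbit_count \<alpha> I j + orbit_count \<alpha> I (j + 1) = 0"
    "orbit_count \<alpha> I (m - 1) - 2 * orbit_count \<alpha> I m + orbit_count \<alpha> I (m + 1) = 0"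
    using orbit_count_second_diff[OF I j_in] orbit_count_second_diff[OF I m_in] by simp_all
  moreover have "fsize \<alpha> + 1 - (j - 1) = m + 1" "fsize \<alpha> + 1 - (j + 1) = m - 1"
    using j_in by (auto simp: m_def felems_def)
  ultimately show ?thesis by (simp add: mirror_defect_def m_def)
qed

lemma mirror_defect_zero:
  assumes I: "I \<in> order_ideals \<alpha>"
    and knot: "\<And>i. 1 \<le> i \<Longrightarrow> i < length \<alpha> \<Longrightarrow> mirror_defect \<alpha> I (psum \<alpha> i) = 0"
    and k: "k \<le> fsize \<alpha> + 1"
  shows "mirror_defect \<alpha> I k = 0"
proof -
  have at_psum: "mirror_defect \<alpha> I (psum \<alpha> i) = 0" if "i \<le> length \<alpha>" for i
  proof -
    consider "i = 0" | "i = length \<alpha>" | "1 \<le> i" "i < length \<alpha>"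
      using \<open>i \<le> length \<alpha>\<close> by linarith
    then show ?thesis
      using knot[of i] mirror_defect_ends[OF I] psum_length by cases simp_all
  qed
  obtain i where i: "1 \<le> i" "i \<le> length \<alpha>" "psum \<alpha> (i - 1) \<le> k" "k \<le> psum \<alpha> i"
    using segment_containing[OF k] .
  have "mirror_defect \<alpha> I (psum \<alpha> (i - 1)) = 0" "mirror_defect \<alpha> I (psum \<alpha> i) = 0"
    using at_psum i(2) by simp_all
  with i(3,4) show ?thesis
    using second_diff_zero_vanishes[OF mirror_defect_second_diff[OF I i(1,2)]] by blast
qed

lemma sum_orbit_chi_mirror:
  assumes I: "I \<in> order_ideals \<alpha>"
    and zero: "\<And>k. k \<le> fsize \<alpha> + 1 \<Longrightarrow> mirror_defect \<alpha> I k = 0"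
    and k: "k \<in> felems \<alpha>"
  shows "(\<Sum>J\<in>orbit \<alpha> I. chi \<alpha> k J) = (\<Sum>J\<in>orbit \<alpha> I. chi \<alpha> (fsize \<alpha> + 1 - k) J)"
proof -
  define m where "m = fsize \<alpha> + 1 - k"
  have m: "m \<in> felems \<alpha>" using k by (auto simp: felems_def m_def)
  have "1 \<le> k" "k \<le> fsize \<alpha>" using k by (simp_all add: felems_def)
  then have "step_up \<alpha> (m - 1) = step_up \<alpha> k" "step_up \<alpha> m = step_up \<alpha> (k - 1)"
    using step_up_mirror[of k] step_up_mirror_pred[of k] by (simp_all add: m_def)
  moreover have "orbit_count \<alpha> I m = card (orbit \<alpha> I) - orbit_count \<alpha> I k"
    "orbit_count \<alpha> I (m + 1) = card (orbit \<alpha> I) - orbit_count \<alpha> I (k - 1)"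
    "orbit_count \<alpha> I (m - 1) = card (orbit \<alpha> I) - orbit_count \<alpha> I (k + 1)"
    using zero[of k] zero[of "k - 1"] zero[of "k + 1"] k
    by (auto simp: mirror_defect_def m_def felems_def Suc_diff_le algebra_simps)
  ultimately show ?thesis
    unfolding m_def[symmetric]
    using sum_orbit_chi_ascending[OF I k] sum_orbit_chi_descending[OF I k]
      sum_orbit_chi_peak[OF I k] sum_orbit_chi_valley[OF I k]
      sum_orbit_chi_ascending[OF I m] sum_orbit_chi_descending[OF I m]
      sum_orbit_chi_peak[OF I m] sum_orbit_chi_valley[OF I m]
    by (cases "step_up \<alpha> (k - 1)"; cases "step_up \<alpha> k") simp_all
qed

end

theorem theorem5p10:
  fixes \<alpha> :: "nat list"
  defines "t \<equiv> length \<alpha>" and "n \<equiv> fsize \<alpha>"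
  assumes "is_fence_comp \<alpha>"
    and "\<forall>i\<in>{1..t}. \<alpha> ! (i - 1) = \<alpha> ! (t + 1 - i - 1)"
    and "odd t"
    and "\<forall>i\<in>{1..t-1}. mesic \<alpha> (\<lambda>I. chi_hat (shared \<alpha> i) I + chi_hat (shared \<alpha> (t - i)) I) 1"
  shows "(\<forall>k\<in>{1..n}. mesic \<alpha> (\<lambda>I. chi_hat k I + chi_hat (n - k + 1) I) 1)
       \<and> (\<forall>k\<in>{1..n}. mesic \<alpha> (\<lambda>I. chi \<alpha> k I - chi \<alpha> (n - k + 1) I) 0)"
proof -
  have "rev \<alpha> = \<alpha>"
  proof (rule nth_equalityI)
    fix i assume "i < length (rev \<alpha>)"
    then show "rev \<alpha> ! i = \<alpha> ! i"
      using assms(4) by (auto simp: rev_nth t_def dest: bspec[of _ _ "Suc i"])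
  qed simp
  then interpret palindromic_odd_fence \<alpha>
    using assms(3,5) by unfold_locales (simp_all add: t_def)
  have zero: "mirror_defect \<alpha> I k = 0" if I: "I \<in> order_ideals \<alpha>" and "k \<le> n + 1" for I k
    using mirror_defect_zero[OF I mirror_defect_psum_if_mesic[OF _ I]] assms(6) that(2)
    unfolding t_def n_def by blast
  have "(\<Sum>J\<in>orbit \<alpha> I. chi_hat k J + chi_hat (n - k + 1) J) = card (orbit \<alpha> I)"
    if "I \<in> order_ideals \<alpha>" "k \<in> {1..n}" for I k
    using zero[OF that(1), of k] that(2)
    by (simp add: mirror_defect_def sum.distrib orbit_count_eq_sum_chi_hat Suc_diff_le n_def)
  moreover have "(\<Sum>J\<in>orbit \<alpha> I. chi \<alpha> k J - chi \<alpha> (n - k + 1) J) = 0"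
    if "I \<in> order_ideals \<alpha>" "k \<in> {1..n}" for I k
    using sum_orbit_chi_mirror[OF that(1) zero[OF that(1)]] that(2)
    by (simp add: sum_subtractf n_def felems_def Suc_diff_le)
  ultimately show ?thesis by (simp add: mesic_iff)
qed

end
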